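(* Let $\Gamma\le N-1$. Consider the three problems: (P$_\Gamma$) $\displaystyle\min_{\bm w\in\widehat{\mathcal V},\,\bm y\in\mathbb R^{N-1}}\bm w^\top\bar{\bm g}$ s.t. $w_i-(\bm c_{[N-1]})_i\in[-y_i\underline v_i,\,y_i\bar v_i]$ ($i\in[N-1]$), $0\le y_i\le1$, $\bm e^\top\bm y=\Gamma$; (L$_\Gamma$) $\displaystyle\max\ I_2(\bm\eta,\bm\theta)+I_1(\underline{\bm\lambda},\bar{\bm\lambda},\Gamma)$ over $(\underline{\bm\lambda},\bar{\bm\lambda},\beta,\bm\eta,\bm\theta)$ satisfying $\bar{\bm g}-\underline{\bm\lambda}+\bar{\bm\lambda}+\beta\bm e-\bm\eta+\sum_{m=1}^M\theta_mh_m\bm\Delta^m=\bm 0$, $\underline{\bm\lambda},\bar{\bm\lambda},\bm\eta,\bm\theta\ge0$, where $I_2(\bm\eta,\bm\theta):=\bm c_{[N-1]}^\top\bar{\bm g}-\bm\eta^\top\bm c_{[N-1]}+\sum_{m=1}^M\theta_mh_m\bm c_{[N-1]}^\top\bm\Delta^m$ and $I_1(\underline{\bm\lambda},\bar{\bm\lambda},\Gamma):=\min\{\sum_{i=1}^{N-1}y_i(-(\underline\lambda_i\underline v_i+\bar\lambda_i\bar v_i)):0\le y_i\le1,\ \bm e^\top\bm y=\Gamma\}$; (D$_\Gamma$) $\displaystyle\max\ \bm c_{[N-1]}^\top\bar{\bm g}-\bm\eta^\top\bm c_{[N-1]}-\sum_{i=1}^{N-1}\tau_i-\tau_0\Gamma+\sum_{m=1}^M\theta_mh_m\bm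 c_{[N-1]}^\top\bm\Delta^m$ over $\underline{\bm\lambda},\bar{\bm\lambda},\bm\eta,\bm\tau\in\mathbb R^{N-1}$, $\beta,\tau_0\in\mathbb R$, $\bm\theta\in\mathbb R^M$ subject to $\bar{\bm g}-\underline{\bm\lambda}+\bar{\bm\lambda}+\beta\bm e-\bm\eta+\sum_{m=1}^M\theta_mh_m\bm\Delta^m=\bm 0$, $-\underline\lambda_i\underline v_i-\bar\lambda_i\bar v_i+\tau_i+\tau_0\ge0$ ($i\in[N-1]$), $\underline{\bm\lambda},\bar{\bm\lambda},\bm\eta,\bm\theta,\bm\tau\ge0$. Then (P$_\Gamma$) and (L$_\Gamma$) can both be reformulated as (D$_\Gamma$): their optimal values coincide with the optimal value of (D$_\Gamma$).
   Context: Let $N\ge3$ be an integer and $\underline x=x_1<x_2<\cdots<x_N=\bar x$ real numbers; $\bm e$ denotes the all-ones vector of the appropriate dimension. Define $\bm g:[\underline x,\bar x]\to\mathbb R^{N-1}$ by $\bm g(x_1)=\bm 0$ and, for $x\in(x_i,x_{i+1}]$ ($i\in\{1,\dots,N-1\}$), $\bm g(x)=(1,\dots,1,\frac{x-x_i}{x_{i+1}-x_i},0,\dots,0)$ with the first $i-1$ entries equal to $1$, the $i$-th entry $\frac{x-x_i}{x_{i+1}-x_i}$ and the last $N-1-i$ entries $0$. For $\bm v\in\mathbb R^{N-2}$ let $\bm R\bm v:=(v_1,\dots,v_{N-2},1-\bm e^\top\bm v)\in\mathbb R^{N-1}$. Let $\bm z\in\mathbb R^n$ and $\bm\xi^1,\dots,\bm\xi^K\in\mathbb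 R^n$ with $\bm z^\top\bm\xi^k\in[\underline x,\bar x]$ (the distribution of $\bm\xi$ puts mass $1/K$ on each $\bm\xi^k$), and $\bar{\bm g}:=\frac1K\sum_{k=1}^K\bm g(\bm z^\top\bm\xi^k)$. Let $M\ge1$ and, for $m=1,\dots,M$, let $r_1^m\le r_3^m$ and $r_2^m$ lie in $[\underline x,\bar x]$, $p^m\in[0,1]$, $h_m\in\{-1,1\}$, and $\bm\Delta^m:=(1-p^m)\bm g(r_1^m)+p^m\bm g(r_3^m)-\bm g(r_2^m)$. Let $\mathcal V:=\{\bm v\in\mathbb R^{N-2}:\bm v\ge0,\ \bm e^\top\bm v\le1,\ h_m(\bm R\bm v)^\top\bm\Delta^m\le0,\ m\in[M]\}$, assumed to have nonempty interior, let $\bm c\in\mathbb R^{N-2}$ be its analytic center (maximizer over the interior of the sum of the logarithms of the slacks of the defining inequalities) and $\bm c_{[N-1]}:=\bm R\bm c$ (so $\bm e^\top\bm c_{[N-1]}=1$). For $i\in[N-1]$ let $\underline v_i:=-\min\{(\bm R\bm v)_i-(\bm c_{[N-1]})_i:\bm v\in\mathcal V\}$ and $\bar v_i:=\max\{(\bm R\bm v)_i-(\bm c_{[N-1]})_i:\bm v\in\mathcal V\}$. Let $\widehat{\mathcal V}:=\{\bm w\in\mathbb R^{N-1}_+:\bm e^\top\bm w=1,\ h_m\bm w^\top\bm\Delta^m\le0,\ m\in[M]\}$. Optimal values are understood in the extended reals. *)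

theory Defs
  imports "HOL-Analysis.Analysis"
begin

text \<open>Vectors of R^(N-1), R^(N-2), R^M are represented as functions nat => real,
  indexed 1-based: entries 1..N-1, 1..N-2, 1..M respectively.\<close>

definition dotN :: "nat \<Rightarrow> (nat \<Rightarrow> real) \<Rightarrow> (nat \<Rightarrow> real) \<Rightarrow> real" where
  "dotN N a b = (\<Sum>i=1..N-1. a i * b i)"

definition gfun :: "nat \<Rightarrow> (nat \<Rightarrow> real) \<Rightarrow> real \<Rightarrow> nat \<Rightarrow> real" where
  "gfun N x t j =
    (if t = x 1 then 0
     else (let i = (THE i. i \<in> {1..N-1} \<and> x i < t \<and> t \<le> x (Suc i)) in
       if j \<in> {1..N-1} then
         (if j < i then 1 else if j = i then (t - x i) / (x (Suc i) - x i) else 0)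
       else 0))"

definition Rmap :: "nat \<Rightarrow> (nat \<Rightarrow> real) \<Rightarrow> nat \<Rightarrow> real" where
  "Rmap N v j = (if j \<in> {1..N-2} then v j
                 else if j = N - 1 then 1 - (\<Sum>i=1..N-2. v i) else 0)"

definition Delta :: "nat \<Rightarrow> (nat \<Rightarrow> real) \<Rightarrow> (nat \<Rightarrow> real) \<Rightarrow> (nat \<Rightarrow> real)
    \<Rightarrow> (nat \<Rightarrow> real) \<Rightarrow> (nat \<Rightarrow> real) \<Rightarrow> nat \<Rightarrow> nat \<Rightarrow> real" where
  "Delta N x r1 r2 r3 p m j =
     (1 - p m) * gfun N x (r1 m) j + p m * gfun N x (r3 m) j - gfun N x (r2 m) j"

definition Vset :: "nat \<Rightarrow> nat \<Rightarrow> (nat \<Rightarrow> real) \<Rightarrow> (nat \<Rightarrow> nat \<Rightarrow> real) \<Rightarrow> (nat \<Rightarrow> real) set" where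
  "Vset N M h \<Delta> = {v. (\<forall>i. i \<notin> {1..N-2} \<longrightarrow> v i = 0) \<and>
       (\<forall>i\<in>{1..N-2}. 0 \<le> v i) \<and> (\<Sum>i=1..N-2. v i) \<le> 1 \<and>
       (\<forall>m\<in>{1..M}. h m * dotN N (Rmap N v) (\<Delta> m) \<le> 0)}"

text \<open>Interior of a subset of R^(N-2) (embedded as functions supported on 1..N-2).\<close>
definition coord_interior :: "nat \<Rightarrow> (nat \<Rightarrow> real) set \<Rightarrow> (nat \<Rightarrow> real) set" where
  "coord_interior N S = {v \<in> S. \<exists>e>0. \<forall>u. (\<forall>i. i \<notin> {1..N-2} \<longrightarrow> u i = 0) \<and>
       (\<forall>i\<in>{1..N-2}. \<bar>u i - v i\<bar> < e) \<longrightarrow> u \<in> S}"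

definition logbarrier :: "nat \<Rightarrow> nat \<Rightarrow> (nat \<Rightarrow> real) \<Rightarrow> (nat \<Rightarrow> nat \<Rightarrow> real) \<Rightarrow> (nat \<Rightarrow> real) \<Rightarrow> real" where
  "logbarrier N M h \<Delta> v =
     (\<Sum>i=1..N-2. ln (v i)) + ln (1 - (\<Sum>i=1..N-2. v i)) +
     (\<Sum>m=1..M. ln (- (h m * dotN N (Rmap N v) (\<Delta> m))))"

definition analytic_center :: "nat \<Rightarrow> nat \<Rightarrow> (nat \<Rightarrow> real) \<Rightarrow> (nat \<Rightarrow> nat \<Rightarrow> real) \<Rightarrow> (nat \<Rightarrow> real) \<Rightarrow> bool" where
  "analytic_center N M h \<Delta> c \<longleftrightarrow>
     c \<in> coord_interior N (Vset N M h \<Delta>) \<and>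
     (\<forall>v \<in> coord_interior N (Vset N M h \<Delta>). logbarrier N M h \<Delta> v \<le> logbarrier N M h \<Delta> c)"

definition vlow :: "nat \<Rightarrow> nat \<Rightarrow> (nat \<Rightarrow> real) \<Rightarrow> (nat \<Rightarrow> nat \<Rightarrow> real) \<Rightarrow> (nat \<Rightarrow> real) \<Rightarrow> nat \<Rightarrow> real" where
  "vlow N M h \<Delta> c i = - Inf {Rmap N v i - Rmap N c i | v. v \<in> Vset N M h \<Delta>}"

definition vup :: "nat \<Rightarrow> nat \<Rightarrow> (nat \<Rightarrow> real) \<Rightarrow> (nat \<Rightarrow> nat \<Rightarrow> real) \<Rightarrow> (nat \<Rightarrow> real) \<Rightarrow> nat \<Rightarrow> real" where
  "vup N M h \<Delta> c i = Sup {Rmap N v i - Rmap N c i | v. v \<in> Vset N M h \<Delta>}"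

definition Vhat :: "nat \<Rightarrow> nat \<Rightarrow> (nat \<Rightarrow> real) \<Rightarrow> (nat \<Rightarrow> nat \<Rightarrow> real) \<Rightarrow> (nat \<Rightarrow> real) set" where
  "Vhat N M h \<Delta> = {w. (\<forall>i\<in>{1..N-1}. 0 \<le> w i) \<and> (\<Sum>i=1..N-1. w i) = 1 \<and>
       (\<forall>m\<in>{1..M}. h m * dotN N w (\<Delta> m) \<le> 0)}"

definition Yset :: "nat \<Rightarrow> real \<Rightarrow> (nat \<Rightarrow> real) set" where
  "Yset N \<Gamma> = {y. (\<forall>i\<in>{1..N-1}. 0 \<le> y i \<and> y i \<le> 1) \<and> (\<Sum>i=1..N-1. y i) = \<Gamma>}"

definition P_val :: "nat \<Rightarrow> nat \<Rightarrow> (nat \<Rightarrow> real) \<Rightarrow> (nat \<Rightarrow> nat \<Rightarrow> real) \<Rightarrow> (nat \<Rightarrow> real)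
    \<Rightarrow> (nat \<Rightarrow> real) \<Rightarrow> real \<Rightarrow> ereal" where
  "P_val N M h \<Delta> gb c \<Gamma> =
     Inf {ereal (dotN N w gb) | w y. w \<in> Vhat N M h \<Delta> \<and> y \<in> Yset N \<Gamma> \<and>
        (\<forall>i\<in>{1..N-1}. - (y i * vlow N M h \<Delta> c i) \<le> w i - Rmap N c i \<and>
                       w i - Rmap N c i \<le> y i * vup N M h \<Delta> c i)}"

definition I1 :: "nat \<Rightarrow> nat \<Rightarrow> (nat \<Rightarrow> real) \<Rightarrow> (nat \<Rightarrow> nat \<Rightarrow> real) \<Rightarrow> (nat \<Rightarrow> real)
    \<Rightarrow> (nat \<Rightarrow> real) \<Rightarrow> (nat \<Rightarrow> real) \<Rightarrow> real \<Rightarrow> ereal" where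
  "I1 N M h \<Delta> c lu lb \<Gamma> =
     Inf {ereal (\<Sum>i=1..N-1. y i * (- (lu i * vlow N M h \<Delta> c i + lb i * vup N M h \<Delta> c i)))
          | y. y \<in> Yset N \<Gamma>}"

definition I2 :: "nat \<Rightarrow> nat \<Rightarrow> (nat \<Rightarrow> real) \<Rightarrow> (nat \<Rightarrow> nat \<Rightarrow> real) \<Rightarrow> (nat \<Rightarrow> real)
    \<Rightarrow> (nat \<Rightarrow> real) \<Rightarrow> (nat \<Rightarrow> real) \<Rightarrow> (nat \<Rightarrow> real) \<Rightarrow> real" where
  "I2 N M h \<Delta> gb c \<eta> \<theta> =
     dotN N (Rmap N c) gb - dotN N \<eta> (Rmap N c) +
     (\<Sum>m=1..M. \<theta> m * h m * dotN N (Rmap N c) (\<Delta> m))"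

definition dual_feas :: "nat \<Rightarrow> nat \<Rightarrow> (nat \<Rightarrow> real) \<Rightarrow> (nat \<Rightarrow> nat \<Rightarrow> real) \<Rightarrow> (nat \<Rightarrow> real)
    \<Rightarrow> (nat \<Rightarrow> real) \<Rightarrow> (nat \<Rightarrow> real) \<Rightarrow> real \<Rightarrow> (nat \<Rightarrow> real) \<Rightarrow> (nat \<Rightarrow> real) \<Rightarrow> bool" where
  "dual_feas N M h \<Delta> gb lu lb \<beta> \<eta> \<theta> \<longleftrightarrow>
     (\<forall>i\<in>{1..N-1}. gb i - lu i + lb i + \<beta> - \<eta> i + (\<Sum>m=1..M. \<theta> m * h m * \<Delta> m i) = 0) \<and>
     (\<forall>i\<in>{1..N-1}. 0 \<le> lu i \<and> 0 \<le> lb i \<and> 0 \<le> \<eta> i) \<and>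
     (\<forall>m\<in>{1..M}. 0 \<le> \<theta> m)"

definition L_val :: "nat \<Rightarrow> nat \<Rightarrow> (nat \<Rightarrow> real) \<Rightarrow> (nat \<Rightarrow> nat \<Rightarrow> real) \<Rightarrow> (nat \<Rightarrow> real)
    \<Rightarrow> (nat \<Rightarrow> real) \<Rightarrow> real \<Rightarrow> ereal" where
  "L_val N M h \<Delta> gb c \<Gamma> =
     Sup {ereal (I2 N M h \<Delta> gb c \<eta> \<theta>) + I1 N M h \<Delta> c lu lb \<Gamma> | lu lb \<beta> \<eta> \<theta>.
            dual_feas N M h \<Delta> gb lu lb \<beta> \<eta> \<theta>}"

definition D_val :: "nat \<Rightarrow> nat \<Rightarrow> (nat \<Rightarrow> real) \<Rightarrow> (nat \<Rightarrow> nat \<Rightarrow> real) \<Rightarrow> (nat \<Rightarrow> real)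
    \<Rightarrow> (nat \<Rightarrow> real) \<Rightarrow> real \<Rightarrow> ereal" where
  "D_val N M h \<Delta> gb c \<Gamma> =
     Sup {ereal (dotN N (Rmap N c) gb - dotN N \<eta> (Rmap N c) - (\<Sum>i=1..N-1. \<tau> i) - \<tau>0 * \<Gamma> +
                 (\<Sum>m=1..M. \<theta> m * h m * dotN N (Rmap N c) (\<Delta> m)))
          | lu lb \<eta> \<tau> \<beta> \<tau>0 \<theta>. dual_feas N M h \<Delta> gb lu lb \<beta> \<eta> \<theta> \<and>
             (\<forall>i\<in>{1..N-1}. - (lu i * vlow N M h \<Delta> c i) - lb i * vup N M h \<Delta> c i + \<tau> i + \<tau>0 \<ge> 0
                            \<and> 0 \<le> \<tau> i)}"

end

(*
  D <= L <= P is weak duality. For fixed multipliers, I1 is the value of the budget LP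
  min {SUM i. y_i a_i | 0 <= y <= 1, e^T y = Gamma}, and every (tau, tau0) feasible for its dual
  bounds it below by -SUM tau - tau0 Gamma; this gives D <= L. The stationarity constraint of
  the multipliers turns w^T gbar into a Lagrangian, which the box constraints
  w_i - c_i in [-y_i vlow_i, y_i vup_i] bound below by I2 plus the budget objective at y;
  this gives L <= P.

  P <= D is strong duality for P_Gamma, read as a finite linear program in (w, y) whose dual is
  D_Gamma. It is obtained, up to an arbitrary epsilon, from Farkas' lemma, which is proved by
  Fourier-Motzkin elimination. For Gamma < 0 the dual objective is unbounded in tau0.
*)
theory Submission
  imports Defs
begin

section \<open>Farkas' lemma by Fourier-Motzkin elimination\<close>

definition solves_rows :: "'j set \<Rightarrow> (('j \<Rightarrow> real) \<times> real) set \<Rightarrow> ('j \<Rightarrow> real) \<Rightarrow> bool" where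
  "solves_rows J S x \<longleftrightarrow> (\<forall>r\<in>S. (\<Sum>k\<in>J. fst r k * x k) \<le> snd r)"

definition fourier_motzkin_combine ::
    "'j \<Rightarrow> ('j \<Rightarrow> real) \<times> real \<Rightarrow> ('j \<Rightarrow> real) \<times> real \<Rightarrow> ('j \<Rightarrow> real) \<times> real"
  where "fourier_motzkin_combine j p q =
    (\<lambda>k. - fst q j * fst p k + fst p j * fst q k, - fst q j * snd p + fst p j * snd q)"

definition fourier_motzkin_eliminate ::
    "'j \<Rightarrow> (('j \<Rightarrow> real) \<times> real) set \<Rightarrow> (('j \<Rightarrow> real) \<times> real) set"
  where "fourier_motzkin_eliminate j S = {r \<in> S. fst r j = 0} \<union>
    (\<lambda>(p, q). fourier_motzkin_combine j p q) ` ({p \<in> S. 0 < fst p j} \<times> {q \<in> S. fst q j < 0})"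

lemma finite_fourier_motzkin_eliminate: "finite S \<Longrightarrow> finite (fourier_motzkin_eliminate j S)"
  by (simp add: fourier_motzkin_eliminate_def)

lemma fourier_motzkin_combine_slack_le:
  fixes J :: "'j set" and x :: "'j \<Rightarrow> real"
  defines "e \<equiv> \<lambda>r :: ('j \<Rightarrow> real) \<times> real. \<Sum>k\<in>J. fst r k * x k"
  assumes "solves_rows J {fourier_motzkin_combine j p q} x" and "0 < fst p j" and "fst q j < 0"
  shows "(snd q - e q) / fst q j \<le> (snd p - e p) / fst p j"
proof -
  have "e (fourier_motzkin_combine j p q) \<le> snd (fourier_motzkin_combine j p q)"
    using assms(2) by (simp add: solves_rows_def e_def)
  moreover have "e (fourier_motzkin_combine j p q) = - fst q j * e p + fst p j * e q"
    by (simp add: e_def fourier_motzkin_combine_def sum.distrib sum_distrib_left sum_subtractf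
        sum_negf algebra_simps)
  ultimately have "0 \<le> - fst q j * (snd p - e p) + fst p j * (snd q - e q)"
    by (simp add: fourier_motzkin_combine_def algebra_simps)
  with assms(3,4) show ?thesis
    by (simp add: divide_simps algebra_simps)
qed

lemma ex_between_finite:
  fixes A B :: "real set"
  assumes "finite A" and "finite B" and "\<forall>a\<in>A. \<forall>b\<in>B. a \<le> b"
  shows "\<exists>t. (\<forall>a\<in>A. a \<le> t) \<and> (\<forall>b\<in>B. t \<le> b)"
proof (cases "B = {}")
  case True
  then show ?thesis
    using assms(1) by (intro exI[of _ "Max (insert 0 A)"]) auto
next
  case False
  then show ?thesis
    using assms by (intro exI[of _ "Min B"]) (auto intro: Min.boundedI)
qed

lemma solves_rows_fourier_motzkin_eliminate:
  fixes x :: "'j \<Rightarrow> real"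
  assumes "finite S" and "finite J" and "j \<notin> J"
    and sol: "solves_rows J (fourier_motzkin_eliminate j S) x"
  shows "\<exists>t. solves_rows (insert j J) S (x(j := t))"
proof -
  define Pos where "Pos = {p \<in> S. 0 < fst p j}"
  define Neg where "Neg = {q \<in> S. fst q j < 0}"
  define e where "e r = (\<Sum>k\<in>J. fst r k * x k)" for r :: "('j \<Rightarrow> real) \<times> real"
  define slack where "slack r = (snd r - e r) / fst r j" for r :: "('j \<Rightarrow> real) \<times> real"
  have fin: "finite Pos" "finite Neg"
    using \<open>finite S\<close> by (simp_all add: Pos_def Neg_def)
  have slack_le: "slack q \<le> slack p" if "p \<in> Pos" "q \<in> Neg" for p q
  proof -
    have "solves_rows J {fourier_motzkin_combine j p q} x"
      using sol that by (force simp: solves_rows_def fourier_motzkin_eliminate_def Pos_def Neg_def)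
    from fourier_motzkin_combine_slack_le[OF this] that show ?thesis
      by (simp add: slack_def e_def Pos_def Neg_def)
  qed
  obtain t where le_t: "\<forall>q\<in>Neg. slack q \<le> t" and t_le: "\<forall>p\<in>Pos. t \<le> slack p"
    using ex_between_finite[of "slack ` Neg" "slack ` Pos"] fin slack_le by auto
  have "solves_rows (insert j J) S (x(j := t))"
    unfolding solves_rows_def
  proof
    fix r assume r: "r \<in> S"
    have lhs: "(\<Sum>k\<in>insert j J. fst r k * (x(j := t)) k) = fst r j * t + e r"
      using assms(2,3) by (auto simp: e_def intro!: sum.cong)
    consider "r \<in> Pos" | "r \<in> Neg" | "fst r j = 0"
      using r by (force simp: Pos_def Neg_def)
    then show "(\<Sum>k\<in>insert j J. fst r k * (x(j := t)) k) \<le> snd r"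
    proof cases
      case 1
      then have "fst r j * t \<le> fst r j * slack r"
        using bspec[OF t_le 1] by (simp add: Pos_def)
      with 1 show ?thesis unfolding lhs by (simp add: slack_def Pos_def)
    next
      case 2
      then have "fst r j * t \<le> fst r j * slack r"
        using bspec[OF le_t 2] by (simp add: Neg_def mult_left_mono_neg)
      with 2 show ?thesis unfolding lhs by (simp add: slack_def Neg_def)
    next
      case 3
      then have "r \<in> fourier_motzkin_eliminate j S"
        using r by (simp add: fourier_motzkin_eliminate_def)
      with 3 sol show ?thesis unfolding lhs by (simp add: solves_rows_def e_def)
    qed
  qed
  then show ?thesis ..
qed

definition nonneg_row_combination :: "(('j \<Rightarrow> real) \<times> real) set \<Rightarrow> ('j \<Rightarrow> real) \<times> real \<Rightarrow> bool"
  where "nonneg_row_combination S s \<longleftrightarrow> (\<exists>\<mu>. (\<forall>r\<in>S. 0 \<le> \<mu> r)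
    \<and> (\<forall>k. (\<Sum>r\<in>S. \<mu> r * fst r k) = fst s k) \<and> (\<Sum>r\<in>S. \<mu> r * snd r) = snd s)"

lemma nonneg_row_combination_sum:
  assumes "finite T" and "\<forall>s\<in>T. nonneg_row_combination S s" and "\<forall>s\<in>T. 0 \<le> l s"
  shows "nonneg_row_combination S (\<lambda>k. \<Sum>s\<in>T. l s * fst s k, \<Sum>s\<in>T. l s * snd s)"
proof -
  obtain \<mu> where \<mu>: "\<forall>s\<in>T. (\<forall>r\<in>S. 0 \<le> \<mu> s r) \<and> (\<forall>k. (\<Sum>r\<in>S. \<mu> s r * fst r k) = fst s k)
      \<and> (\<Sum>r\<in>S. \<mu> s r * snd r) = snd s"
    using bchoice[OF assms(2)[unfolded nonneg_row_combination_def]] by blast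
  define \<nu> where "\<nu> r = (\<Sum>s\<in>T. l s * \<mu> s r)" for r
  have \<nu>_comb: "(\<Sum>r\<in>S. \<nu> r * f r) = (\<Sum>s\<in>T. l s * (\<Sum>r\<in>S. \<mu> s r * f r))" for f
    unfolding \<nu>_def sum_distrib_right sum_distrib_left by (subst sum.swap) (simp add: mult.assoc)
  have "\<forall>r\<in>S. 0 \<le> \<nu> r"
    using assms(3) \<mu> by (auto simp: \<nu>_def intro!: sum_nonneg)
  moreover have "(\<Sum>r\<in>S. \<nu> r * fst r k) = (\<Sum>s\<in>T. l s * fst s k)" for k
    unfolding \<nu>_comb using \<mu> by (intro sum.cong) auto
  moreover have "(\<Sum>r\<in>S. \<nu> r * snd r) = (\<Sum>s\<in>T. l s * snd s)"
    unfolding \<nu>_comb using \<mu> by (intro sum.cong) auto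
  ultimately show ?thesis
    unfolding nonneg_row_combination_def by auto
qed

lemma fourier_motzkin_eliminate_nonneg_combination:
  assumes "finite S" and "s \<in> fourier_motzkin_eliminate j S"
  shows "nonneg_row_combination S s"
  unfolding nonneg_row_combination_def
proof (cases "s \<in> S")
  case True
  then show "\<exists>\<mu>. (\<forall>r\<in>S. 0 \<le> \<mu> r) \<and> (\<forall>k. (\<Sum>r\<in>S. \<mu> r * fst r k) = fst s k)
      \<and> (\<Sum>r\<in>S. \<mu> r * snd r) = snd s"
    using \<open>finite S\<close>
    by (intro exI[of _ "\<lambda>r. if r = s then 1 else 0"])
       (simp add: if_distrib[of "\<lambda>u. u * _"] cong: if_cong)
next
  case False
  then obtain p q where pq: "p \<in> S" "q \<in> S" "0 < fst p j" "fst q j < 0"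
      "s = fourier_motzkin_combine j p q"
    using assms(2) by (auto simp: fourier_motzkin_eliminate_def)
  define \<mu> where "\<mu> r = (if r = p then - fst q j else 0) + (if r = q then fst p j else 0)" for r
  have "p \<noteq> q" using pq by auto
  then have comb: "(\<Sum>r\<in>S. \<mu> r * f r) = - fst q j * f p + fst p j * f q" for f
    using pq \<open>finite S\<close>
    by (simp add: \<mu>_def distrib_right sum.distrib if_distrib[of "\<lambda>u. u * _"] cong: if_cong)
  moreover have "\<forall>r\<in>S. 0 \<le> \<mu> r"
    using pq by (simp add: \<mu>_def)
  ultimately show "\<exists>\<mu>. (\<forall>r\<in>S. 0 \<le> \<mu> r) \<and> (\<forall>k. (\<Sum>r\<in>S. \<mu> r * fst r k) = fst s k)
      \<and> (\<Sum>r\<in>S. \<mu> r * snd r) = snd s"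
    using pq by (intro exI[of _ \<mu>]) (simp add: comb fourier_motzkin_combine_def)
qed

lemma fourier_motzkin_eliminate_coeff: "s \<in> fourier_motzkin_eliminate j S \<Longrightarrow> fst s j = 0"
  by (auto simp: fourier_motzkin_eliminate_def fourier_motzkin_combine_def)

lemma farkas_rows:
  assumes "finite J" and "finite S" and "\<nexists>x. solves_rows J S x"
  shows "\<exists>l. (\<forall>r\<in>S. 0 \<le> l r) \<and> (\<forall>k\<in>J. (\<Sum>r\<in>S. l r * fst r k) = 0)
    \<and> (\<Sum>r\<in>S. l r * snd r) < 0"
  using assms
proof (induction J arbitrary: S rule: finite_induct)
  case empty
  then obtain s where "s \<in> S" "snd s < 0"
    by (force simp: solves_rows_def)
  then show ?case using empty.prems(1)
    by (intro exI[of _ "\<lambda>r. if r = s then 1 else 0"])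
       (simp add: if_distrib[of "\<lambda>u. u * _"] cong: if_cong)
next
  case (insert j J)
  define S' where "S' = fourier_motzkin_eliminate j S"
  have "finite S'"
    using finite_fourier_motzkin_eliminate[OF insert.prems(1)] by (simp add: S'_def)
  have "\<nexists>x. solves_rows J S' x"
  proof
    assume "\<exists>x. solves_rows J S' x"
    then obtain x where "solves_rows J S' x" ..
    with solves_rows_fourier_motzkin_eliminate[OF insert.prems(1) insert.hyps(1,2)] insert.prems(2)
    show False unfolding S'_def by blast
  qed
  then obtain l' where l': "\<forall>s\<in>S'. 0 \<le> l' s" "\<forall>k\<in>J. (\<Sum>s\<in>S'. l' s * fst s k) = 0"
      "(\<Sum>s\<in>S'. l' s * snd s) < 0"
    using insert.IH[OF \<open>finite S'\<close>] by blast
  have "\<forall>s\<in>S'. nonneg_row_combination S s"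
    using fourier_motzkin_eliminate_nonneg_combination[OF insert.prems(1)] by (simp add: S'_def)
  from nonneg_row_combination_sum[OF \<open>finite S'\<close> this l'(1)]
  obtain l where l: "\<forall>r\<in>S. 0 \<le> l r" "\<forall>k. (\<Sum>r\<in>S. l r * fst r k) = (\<Sum>s\<in>S'. l' s * fst s k)"
      "(\<Sum>r\<in>S. l r * snd r) = (\<Sum>s\<in>S'. l' s * snd s)"
    unfolding nonneg_row_combination_def by auto
  have "(\<Sum>s\<in>S'. l' s * fst s j) = 0"
    by (rule sum.neutral) (simp add: S'_def fourier_motzkin_eliminate_coeff)
  with l l' show ?case
    by auto
qed

lemma farkas_lemma:
  fixes A :: "'i \<Rightarrow> 'j \<Rightarrow> real" and b :: "'i \<Rightarrow> real"
  assumes "finite I" and "finite J" and "\<nexists>x. \<forall>i\<in>I. (\<Sum>k\<in>J. A i k * x k) \<le> b i"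
  shows "\<exists>\<kappa>. (\<forall>i\<in>I. 0 \<le> \<kappa> i) \<and> (\<forall>k\<in>J. (\<Sum>i\<in>I. \<kappa> i * A i k) = 0)
    \<and> (\<Sum>i\<in>I. \<kappa> i * b i) < 0"
proof -
  define row where "row i = (A i, b i)" for i
  have "\<nexists>x. solves_rows J (row ` I) x"
    using assms(3) by (auto simp: solves_rows_def row_def)
  then obtain l where l: "\<forall>r\<in>row ` I. 0 \<le> l r" "\<forall>k\<in>J. (\<Sum>r\<in>row ` I. l r * fst r k) = 0"
      "(\<Sum>r\<in>row ` I. l r * snd r) < 0"
    using farkas_rows[OF assms(2)] assms(1) by blast
  \<comment> \<open>several indices may produce the same row: its multiplier is shared evenly among them\<close>
  define \<kappa> where "\<kappa> i = l (row i) / card {i' \<in> I. row i' = row i}" for i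
  have \<kappa>_sum: "(\<Sum>i\<in>I. \<kappa> i * f (row i)) = (\<Sum>r\<in>row ` I. l r * f r)" for f
  proof -
    have "(\<Sum>i\<in>I. \<kappa> i * f (row i))
        = (\<Sum>r\<in>row ` I. \<Sum>i\<in>{i' \<in> I. row i' = r}. \<kappa> i * f (row i))"
      by (rule sum.image_gen[OF assms(1)])
    also have "\<dots> = (\<Sum>r\<in>row ` I. l r * f r)"
    proof (rule sum.cong[OF refl])
      fix r assume "r \<in> row ` I"
      then have "card {i' \<in> I. row i' = r} \<noteq> 0"
        using assms(1) by (auto simp: card_eq_0_iff)
      then show "(\<Sum>i\<in>{i' \<in> I. row i' = r}. \<kappa> i * f (row i)) = l r * f r"
        by (simp add: \<kappa>_def)
    qed
    finally show ?thesis .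
  qed
  show ?thesis
  proof (intro exI[of _ \<kappa>] conjI ballI)
    show "0 \<le> \<kappa> i" if "i \<in> I" for i
      using that l(1) by (simp add: \<kappa>_def)
    show "(\<Sum>i\<in>I. \<kappa> i * A i k) = 0" if "k \<in> J" for k
      using that l(2) \<kappa>_sum[of "\<lambda>r. fst r k"] by (simp add: row_def)
    show "(\<Sum>i\<in>I. \<kappa> i * b i) < 0"
      using l(3) \<kappa>_sum[of snd] by (simp add: row_def)
  qed
qed

lemma nonneg_combination_le:
  assumes "\<forall>i\<in>I. (\<Sum>k\<in>J. A i k * x k) \<le> b i" and "\<forall>i\<in>I. 0 \<le> \<nu> i"
  shows "(\<Sum>k\<in>J. (\<Sum>i\<in>I. \<nu> i * A i k) * x k) \<le> (\<Sum>i\<in>I. \<nu> i * (b i :: real))"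
proof -
  have "(\<Sum>k\<in>J. (\<Sum>i\<in>I. \<nu> i * A i k) * x k) = (\<Sum>i\<in>I. \<nu> i * (\<Sum>k\<in>J. A i k * x k))"
    unfolding sum_distrib_left sum_distrib_right by (subst sum.swap) (simp add: mult.assoc)
  also have "\<dots> \<le> (\<Sum>i\<in>I. \<nu> i * b i)"
    using assms by (intro sum_mono mult_left_mono) auto
  finally show ?thesis .
qed

lemma lp_approx_strong_duality:
  fixes A :: "'i \<Rightarrow> 'j \<Rightarrow> real" and b :: "'i \<Rightarrow> real" and c :: "'j \<Rightarrow> real"
  assumes "finite I" and "finite J"
    and feasible: "\<forall>i\<in>I. (\<Sum>k\<in>J. A i k * x\<^sub>0 k) \<le> b i"
    and bounded: "\<And>x. \<forall>i\<in>I. (\<Sum>k\<in>J. A i k * x k) \<le> b i \<Longrightarrow> p \<le> (\<Sum>k\<in>J. c k * x k)"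
    and "0 < e"
  shows "\<exists>\<kappa>. (\<forall>i\<in>I. 0 \<le> \<kappa> i) \<and> (\<forall>k\<in>J. (\<Sum>i\<in>I. \<kappa> i * A i k) = - c k)
           \<and> p - e \<le> - (\<Sum>i\<in>I. \<kappa> i * b i)"
proof -
  \<comment> \<open>adjoin the row \<open>c x \<le> p - e\<close>, indexed by None, which makes the system infeasible\<close>
  define A' where "A' = case_option c A"
  define b' where "b' = case_option (p - e) b"
  define I' where "I' = insert None (Some ` I)"
  have sum_I': "(\<Sum>u\<in>I'. f u) = f None + (\<Sum>i\<in>I. f (Some i))" for f :: "_ \<Rightarrow> real"
    using assms(1) by (simp add: I'_def sum.reindex)
  have "\<nexists>x. \<forall>u\<in>I'. (\<Sum>k\<in>J. A' u k * x k) \<le> b' u"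
    using bounded \<open>0 < e\<close> by (force simp: I'_def A'_def b'_def)
  then obtain \<kappa> where \<kappa>: "\<forall>u\<in>I'. 0 \<le> \<kappa> u" "\<forall>k\<in>J. (\<Sum>u\<in>I'. \<kappa> u * A' u k) = 0"
      "(\<Sum>u\<in>I'. \<kappa> u * b' u) < 0"
    using farkas_lemma[of I' J] assms(1,2) unfolding I'_def by blast
  define \<mu> where "\<mu> = \<kappa> None"
  define \<nu> where "\<nu> i = \<kappa> (Some i)" for i
  have \<nu>_nonneg: "\<forall>i\<in>I. 0 \<le> \<nu> i" and "0 \<le> \<mu>"
    using \<kappa>(1) by (simp_all add: I'_def \<nu>_def \<mu>_def)
  have cols: "\<mu> * c k + (\<Sum>i\<in>I. \<nu> i * A i k) = 0" if "k \<in> J" for k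
    using \<kappa>(2) that by (simp add: sum_I' A'_def \<mu>_def \<nu>_def)
  have obj: "\<mu> * (p - e) + (\<Sum>i\<in>I. \<nu> i * b i) < 0"
    using \<kappa>(3) by (simp add: sum_I' b'_def \<mu>_def \<nu>_def)
  have "\<mu> \<noteq> 0"
  proof
    assume "\<mu> = 0"
    with cols have "(\<Sum>k\<in>J. (\<Sum>i\<in>I. \<nu> i * A i k) * x\<^sub>0 k) = 0"
      by simp
    with nonneg_combination_le[OF feasible \<nu>_nonneg] obj \<open>\<mu> = 0\<close> show False
      by simp
  qed
  with \<open>0 \<le> \<mu>\<close> have "0 < \<mu>" by simp
  show ?thesis
  proof (intro exI[of _ "\<lambda>i. \<nu> i / \<mu>"] conjI ballI)
    show "0 \<le> \<nu> i / \<mu>" if "i \<in> I" for i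
      using that \<nu>_nonneg \<open>0 < \<mu>\<close> by simp
    show "(\<Sum>i\<in>I. \<nu> i / \<mu> * A i k) = - c k" if "k \<in> J" for k
      using cols[OF that] \<open>0 < \<mu>\<close> by (simp add: sum_divide_distrib[symmetric] field_simps)
    show "p - e \<le> - (\<Sum>i\<in>I. \<nu> i / \<mu> * b i)"
      using obj \<open>0 < \<mu>\<close> by (simp add: sum_divide_distrib[symmetric] field_simps)
  qed
qed

section \<open>Weak duality\<close>

lemma sum_Rmap:
  assumes "3 \<le> N"
  shows "(\<Sum>i=1..N-1. Rmap N v i) = 1"
proof -
  have last: "N - 1 \<notin> {1..N-2}"
    using assms by simp arith
  moreover have "{1..N-1} = insert (N-1) {1..N-2}"
    using assms by auto
  ultimately have "(\<Sum>i=1..N-1. Rmap N v i) = Rmap N v (N-1) + (\<Sum>i=1..N-2. Rmap N v i)"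
    by simp
  also have "Rmap N v (N-1) = 1 - (\<Sum>i=1..N-2. v i)"
    using last by (simp add: Rmap_def del: atLeastAtMost_iff)
  also have "(\<Sum>i=1..N-2. Rmap N v i) = (\<Sum>i=1..N-2. v i)"
    by (rule sum.cong) (auto simp: Rmap_def)
  finally show ?thesis
    by simp
qed

lemma Rmap_bounds:
  assumes "v \<in> Vset N M h \<Delta>"
  shows "0 \<le> Rmap N v i \<and> Rmap N v i \<le> 1"
proof -
  have nonneg: "\<forall>i\<in>{1..N-2}. 0 \<le> v i" and le1: "(\<Sum>i=1..N-2. v i) \<le> 1"
    using assms by (auto simp: Vset_def)
  show ?thesis
  proof (cases "i \<in> {1..N-2}")
    case True
    then have "v i \<le> (\<Sum>i=1..N-2. v i)"
      using nonneg by (intro member_le_sum) auto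
    then show ?thesis using True nonneg le1 by (simp add: Rmap_def)
  next
    case False
    then show ?thesis using nonneg le1 sum_nonneg[of "{1..N-2}" v] by (auto simp: Rmap_def)
  qed
qed

lemma Rmap_in_Vhat:
  assumes "3 \<le> N" and "v \<in> Vset N M h \<Delta>"
  shows "Rmap N v \<in> Vhat N M h \<Delta>"
  using Rmap_bounds[OF assms(2)] sum_Rmap[OF assms(1)] assms(2)
  by (simp add: Vhat_def Vset_def)

lemma vlow_vup_nonneg:
  assumes "c \<in> Vset N M h \<Delta>"
  shows "0 \<le> vlow N M h \<Delta> c i" and "0 \<le> vup N M h \<Delta> c i"
proof -
  define T where "T = {Rmap N v i - Rmap N c i | v. v \<in> Vset N M h \<Delta>}"
  have "0 \<in> T"
    using assms unfolding T_def by force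
  moreover have "T \<subseteq> {-1..1}"
    using Rmap_bounds[OF assms, of i] by (auto simp: T_def dest!: Rmap_bounds[where i = i])
  then have "bdd_below T" "bdd_above T"
    by (auto intro: bdd_below_mono bdd_above_mono)
  ultimately have "Inf T \<le> 0" "0 \<le> Sup T"
    by (auto intro: cInf_lower cSup_upper)
  then show "0 \<le> vlow N M h \<Delta> c i" "0 \<le> vup N M h \<Delta> c i"
    by (simp_all add: vlow_def vup_def T_def)
qed

lemma dual_objective_eq:
  assumes "dual_feas N M h \<Delta> gb lu lb \<beta> \<eta> \<theta>" and "(\<Sum>i=1..N-1. w i) = 1"
  shows "dotN N w gb - dotN N \<eta> w + (\<Sum>m=1..M. \<theta> m * h m * dotN N w (\<Delta> m))
    = (\<Sum>i=1..N-1. w i * (lu i - lb i)) - \<beta>"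
proof -
  have "w i * gb i = w i * (lu i - lb i) - \<beta> * w i + \<eta> i * w i
      - (\<Sum>m=1..M. \<theta> m * h m * (w i * \<Delta> m i))" if "i \<in> {1..N-1}" for i
  proof -
    have gb_i: "gb i = lu i - lb i - \<beta> + \<eta> i - (\<Sum>m=1..M. \<theta> m * h m * \<Delta> m i)"
      using assms(1) that unfolding dual_feas_def by (simp add: algebra_simps)
    show ?thesis
      unfolding gb_i by (simp add: algebra_simps sum_distrib_left)
  qed
  then have "dotN N w gb = (\<Sum>i=1..N-1. w i * (lu i - lb i)) - \<beta> * (\<Sum>i=1..N-1. w i)
      + dotN N \<eta> w - (\<Sum>i=1..N-1. \<Sum>m=1..M. \<theta> m * h m * (w i * \<Delta> m i))"
    unfolding dotN_def by (simp add: sum.distrib sum_subtractf sum_distrib_left)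
  also have "(\<Sum>i=1..N-1. \<Sum>m=1..M. \<theta> m * h m * (w i * \<Delta> m i))
      = (\<Sum>m=1..M. \<theta> m * h m * dotN N w (\<Delta> m))"
    unfolding dotN_def sum_distrib_left by (rule sum.swap)
  finally show ?thesis
    using assms(2) by simp
qed

definition primal_feasible :: "nat \<Rightarrow> nat \<Rightarrow> (nat \<Rightarrow> real) \<Rightarrow> (nat \<Rightarrow> nat \<Rightarrow> real)
    \<Rightarrow> (nat \<Rightarrow> real) \<Rightarrow> (nat \<Rightarrow> real) \<Rightarrow> (nat \<Rightarrow> real) \<Rightarrow> real
    \<Rightarrow> (nat \<Rightarrow> real) \<Rightarrow> (nat \<Rightarrow> real) \<Rightarrow> bool" where
  "primal_feasible N M h \<Delta> C vl vu \<Gamma> w y \<longleftrightarrow> w \<in> Vhat N M h \<Delta> \<and> y \<in> Yset N \<Gamma> \<and>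
     (\<forall>i\<in>{1..N-1}. - (y i * vl i) \<le> w i - C i \<and> w i - C i \<le> y i * vu i)"

lemma P_val_eq:
  "P_val N M h \<Delta> gb c \<Gamma> = Inf {ereal (dotN N w gb) | w y.
     primal_feasible N M h \<Delta> (Rmap N c) (vlow N M h \<Delta> c) (vup N M h \<Delta> c) \<Gamma> w y}"
  unfolding P_val_def primal_feasible_def ..

lemma primal_weak_duality:
  assumes "dual_feas N M h \<Delta> gb lu lb \<beta> \<eta> \<theta>" and "primal_feasible N M h \<Delta> C vl vu \<Gamma> w y"
  shows "(\<Sum>i=1..N-1. C i * (lu i - lb i)) - \<beta> + (\<Sum>i=1..N-1. y i * - (lu i * vl i + lb i * vu i))
    \<le> dotN N w gb"
proof -
  have w: "(\<Sum>i=1..N-1. w i) = 1" "\<forall>i\<in>{1..N-1}. 0 \<le> w i" "\<forall>m\<in>{1..M}. h m * dotN N w (\<Delta> m) \<le> 0"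
    and box: "\<forall>i\<in>{1..N-1}. - (y i * vl i) \<le> w i - C i \<and> w i - C i \<le> y i * vu i"
    using assms(2) by (auto simp: primal_feasible_def Vhat_def)
  have mult: "\<forall>i\<in>{1..N-1}. 0 \<le> lu i \<and> 0 \<le> lb i \<and> 0 \<le> \<eta> i" "\<forall>m\<in>{1..M}. 0 \<le> \<theta> m"
    using assms(1) by (auto simp: dual_feas_def)
  have "0 \<le> dotN N \<eta> w"
    unfolding dotN_def using w(2) mult(1) by (intro sum_nonneg) auto
  moreover have "(\<Sum>m=1..M. \<theta> m * h m * dotN N w (\<Delta> m)) \<le> 0"
    using w(3) mult(2) by (intro sum_nonpos) (simp add: mult.assoc mult_nonneg_nonpos)
  moreover have "(\<Sum>i=1..N-1. y i * - (lu i * vl i + lb i * vu i))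
      \<le> (\<Sum>i=1..N-1. (w i - C i) * (lu i - lb i))"
  proof (rule sum_mono)
    fix i assume i: "i \<in> {1..N-1}"
    have "- (y i * vl i) * lu i \<le> (w i - C i) * lu i"
      using box mult i by (intro mult_right_mono) auto
    moreover have "(w i - C i) * lb i \<le> y i * vu i * lb i"
      using box mult i by (intro mult_right_mono) auto
    ultimately show "y i * - (lu i * vl i + lb i * vu i) \<le> (w i - C i) * (lu i - lb i)"
      by (simp add: algebra_simps)
  qed
  ultimately show ?thesis
    using dual_objective_eq[OF assms(1) w(1)]
    by (simp add: left_diff_distrib sum_subtractf)
qed

definition budget_dual_feas :: "nat \<Rightarrow> (nat \<Rightarrow> real) \<Rightarrow> (nat \<Rightarrow> real)
    \<Rightarrow> (nat \<Rightarrow> real) \<Rightarrow> (nat \<Rightarrow> real) \<Rightarrow> (nat \<Rightarrow> real) \<Rightarrow> real \<Rightarrow> bool" where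
  "budget_dual_feas N vl vu lu lb \<tau> \<tau>0 \<longleftrightarrow>
     (\<forall>i\<in>{1..N-1}. - (lu i * vl i) - lb i * vu i + \<tau> i + \<tau>0 \<ge> 0 \<and> 0 \<le> \<tau> i)"

lemma budget_weak_duality:
  assumes "y \<in> Yset N \<Gamma>" and "\<forall>i\<in>{1..N-1}. 0 \<le> a i + \<tau> i + \<tau>0 \<and> 0 \<le> \<tau> i"
  shows "- (\<Sum>i=1..N-1. \<tau> i) - \<tau>0 * \<Gamma> \<le> (\<Sum>i=1..N-1. y i * a i)"
proof -
  have y: "\<forall>i\<in>{1..N-1}. 0 \<le> y i \<and> y i \<le> 1" "(\<Sum>i=1..N-1. y i) = \<Gamma>"
    using assms(1) by (auto simp: Yset_def)
  have "(\<Sum>i=1..N-1. - \<tau> i - \<tau>0 * y i) \<le> (\<Sum>i=1..N-1. y i * a i)"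
  proof (rule sum_mono)
    fix i assume i: "i \<in> {1..N-1}"
    have "- \<tau> i - \<tau>0 \<le> a i"
      using assms(2) i by force
    then have "y i * (- \<tau> i - \<tau>0) \<le> y i * a i"
      using y(1) i by (intro mult_left_mono) auto
    moreover have "y i * \<tau> i \<le> \<tau> i"
      using assms(2) y(1) i by (simp add: mult_left_le_one_le)
    ultimately show "- \<tau> i - \<tau>0 * y i \<le> y i * a i"
      by (simp add: algebra_simps)
  qed
  with y(2) show ?thesis
    by (simp add: sum_subtractf sum_negf sum_distrib_left[symmetric])
qed

lemma P_val_le:
  "primal_feasible N M h \<Delta> (Rmap N c) (vlow N M h \<Delta> c) (vup N M h \<Delta> c) \<Gamma> w y \<Longrightarrow>
    P_val N M h \<Delta> gb c \<Gamma> \<le> ereal (dotN N w gb)"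
  unfolding P_val_eq by (rule Inf_lower) blast

lemma le_P_val:
  "(\<And>w y. primal_feasible N M h \<Delta> (Rmap N c) (vlow N M h \<Delta> c) (vup N M h \<Delta> c) \<Gamma> w y
      \<Longrightarrow> a \<le> ereal (dotN N w gb)) \<Longrightarrow> a \<le> P_val N M h \<Delta> gb c \<Gamma>"
  unfolding P_val_eq by (rule Inf_greatest) blast

lemma I1_le:
  "y \<in> Yset N \<Gamma> \<Longrightarrow>
    I1 N M h \<Delta> c lu lb \<Gamma>
      \<le> ereal (\<Sum>i=1..N-1. y i * - (lu i * vlow N M h \<Delta> c i + lb i * vup N M h \<Delta> c i))"
  unfolding I1_def by (rule Inf_lower) blast

lemma le_I1:
  assumes "budget_dual_feas N (vlow N M h \<Delta> c) (vup N M h \<Delta> c) lu lb \<tau> \<tau>0"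
  shows "ereal (- (\<Sum>i=1..N-1. \<tau> i) - \<tau>0 * \<Gamma>) \<le> I1 N M h \<Delta> c lu lb \<Gamma>"
  unfolding I1_def
proof (rule Inf_greatest, clarify)
  fix y assume "y \<in> Yset N \<Gamma>"
  then show "ereal (- (\<Sum>i=1..N-1. \<tau> i) - \<tau>0 * \<Gamma>)
    \<le> ereal (\<Sum>i=1..N-1. y i * - (lu i * vlow N M h \<Delta> c i + lb i * vup N M h \<Delta> c i))"
    using budget_weak_duality[of y N \<Gamma> "\<lambda>i. - (lu i * vlow N M h \<Delta> c i + lb i * vup N M h \<Delta> c i)"]
      assms
    by (simp add: budget_dual_feas_def)
qed

lemma le_L_val:
  "dual_feas N M h \<Delta> gb lu lb \<beta> \<eta> \<theta> \<Longrightarrow>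
    ereal (I2 N M h \<Delta> gb c \<eta> \<theta>) + I1 N M h \<Delta> c lu lb \<Gamma> \<le> L_val N M h \<Delta> gb c \<Gamma>"
  unfolding L_val_def by (rule Sup_upper) blast

lemma D_val_eq:
  "D_val N M h \<Delta> gb c \<Gamma> = Sup {ereal (I2 N M h \<Delta> gb c \<eta> \<theta> - (\<Sum>i=1..N-1. \<tau> i) - \<tau>0 * \<Gamma>)
     | lu lb \<eta> \<tau> \<beta> \<tau>0 \<theta>. dual_feas N M h \<Delta> gb lu lb \<beta> \<eta> \<theta> \<and>
       budget_dual_feas N (vlow N M h \<Delta> c) (vup N M h \<Delta> c) lu lb \<tau> \<tau>0}"
  unfolding D_val_def I2_def budget_dual_feas_def by (simp add: algebra_simps)

lemma le_D_val:
  assumes "dual_feas N M h \<Delta> gb lu lb \<beta> \<eta> \<theta>"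
    and "budget_dual_feas N (vlow N M h \<Delta> c) (vup N M h \<Delta> c) lu lb \<tau> \<tau>0"
  shows "ereal (I2 N M h \<Delta> gb c \<eta> \<theta> - (\<Sum>i=1..N-1. \<tau> i) - \<tau>0 * \<Gamma>) \<le> D_val N M h \<Delta> gb c \<Gamma>"
  unfolding D_val_eq by (rule Sup_upper) (use assms in blast)

lemma I2_eq:
  assumes "3 \<le> N" and "dual_feas N M h \<Delta> gb lu lb \<beta> \<eta> \<theta>"
  shows "I2 N M h \<Delta> gb c \<eta> \<theta> = (\<Sum>i=1..N-1. Rmap N c i * (lu i - lb i)) - \<beta>"
  unfolding I2_def using dual_objective_eq[OF assms(2) sum_Rmap[OF assms(1)]] by simp

lemma D_val_le_L_val: "D_val N M h \<Delta> gb c \<Gamma> \<le> L_val N M h \<Delta> gb c \<Gamma>"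
  unfolding D_val_eq
proof (rule Sup_least, clarify)
  fix lu lb \<eta> \<tau> \<beta> \<tau>0 \<theta>
  assume feas: "dual_feas N M h \<Delta> gb lu lb \<beta> \<eta> \<theta>"
    and budget: "budget_dual_feas N (vlow N M h \<Delta> c) (vup N M h \<Delta> c) lu lb \<tau> \<tau>0"
  have "ereal (I2 N M h \<Delta> gb c \<eta> \<theta> - (\<Sum>i=1..N-1. \<tau> i) - \<tau>0 * \<Gamma>)
      = ereal (I2 N M h \<Delta> gb c \<eta> \<theta>) + ereal (- (\<Sum>i=1..N-1. \<tau> i) - \<tau>0 * \<Gamma>)"
    by simp
  also have "\<dots> \<le> ereal (I2 N M h \<Delta> gb c \<eta> \<theta>) + I1 N M h \<Delta> c lu lb \<Gamma>"
    by (rule add_left_mono[OF le_I1[OF budget]])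
  also have "\<dots> \<le> L_val N M h \<Delta> gb c \<Gamma>"
    by (rule le_L_val[OF feas])
  finally show "ereal (I2 N M h \<Delta> gb c \<eta> \<theta> - (\<Sum>i=1..N-1. \<tau> i) - \<tau>0 * \<Gamma>) \<le> L_val N M h \<Delta> gb c \<Gamma>" .
qed

lemma L_val_le_P_val:
  assumes "3 \<le> N"
  shows "L_val N M h \<Delta> gb c \<Gamma> \<le> P_val N M h \<Delta> gb c \<Gamma>"
  unfolding L_val_def
proof (rule Sup_least, clarify)
  fix lu lb \<beta> \<eta> \<theta> assume feas: "dual_feas N M h \<Delta> gb lu lb \<beta> \<eta> \<theta>"
  show "ereal (I2 N M h \<Delta> gb c \<eta> \<theta>) + I1 N M h \<Delta> c lu lb \<Gamma> \<le> P_val N M h \<Delta> gb c \<Gamma>"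
  proof (rule le_P_val)
    fix w y
    assume primal: "primal_feasible N M h \<Delta> (Rmap N c) (vlow N M h \<Delta> c) (vup N M h \<Delta> c) \<Gamma> w y"
    then have "y \<in> Yset N \<Gamma>"
      by (simp add: primal_feasible_def)
    then have "ereal (I2 N M h \<Delta> gb c \<eta> \<theta>) + I1 N M h \<Delta> c lu lb \<Gamma>
        \<le> ereal (I2 N M h \<Delta> gb c \<eta> \<theta>)
          + ereal (\<Sum>i=1..N-1. y i * - (lu i * vlow N M h \<Delta> c i + lb i * vup N M h \<Delta> c i))"
      by (intro add_left_mono I1_le)
    also have "\<dots> \<le> ereal (dotN N w gb)"
      using primal_weak_duality[OF feas primal] I2_eq[OF assms feas] by simp
    finally show "ereal (I2 N M h \<Delta> gb c \<eta> \<theta>) + I1 N M h \<Delta> c lu lb \<Gamma> \<le> ereal (dotN N w gb)" .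
  qed
qed

section \<open>Strong duality\<close>

text \<open>
  \<open>P\<^sub>\<Gamma>\<close> as a linear program in \<open>x = (w, y)\<close>, with \<open>w\<^sub>k = x (Inl k)\<close> and \<open>y\<^sub>k = x (Inr k)\<close>:
  the row \<open>r\<close> stands for the inequality \<open>(\<Sum>v. primal_coeff r v * x v) \<le> primal_rhs r\<close>,
  and each equality constraint is split into two opposite rows.
\<close>

datatype primal_row =
  W_nonneg nat | W_lower nat | W_upper nat | Y_nonneg nat | Y_le_one nat | Delta_sign nat
  | W_sum_le | W_sum_ge | Y_sum_le | Y_sum_ge

context
  fixes N M :: nat and h :: "nat \<Rightarrow> real" and \<Delta> :: "nat \<Rightarrow> nat \<Rightarrow> real"
    and C vl vu :: "nat \<Rightarrow> real" and \<Gamma> :: real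
begin

fun primal_coeff :: "primal_row \<Rightarrow> nat + nat \<Rightarrow> real" where
  "primal_coeff (W_nonneg a) (Inl k) = - of_bool (k = a)"
| "primal_coeff (W_lower a) (Inl k) = - of_bool (k = a)"
| "primal_coeff (W_lower a) (Inr k) = - of_bool (k = a) * vl a"
| "primal_coeff (W_upper a) (Inl k) = of_bool (k = a)"
| "primal_coeff (W_upper a) (Inr k) = - of_bool (k = a) * vu a"
| "primal_coeff (Y_nonneg a) (Inr k) = - of_bool (k = a)"
| "primal_coeff (Y_le_one a) (Inr k) = of_bool (k = a)"
| "primal_coeff (Delta_sign m) (Inl k) = h m * \<Delta> m k"
| "primal_coeff W_sum_le (Inl k) = 1"
| "primal_coeff W_sum_ge (Inl k) = -1"
| "primal_coeff Y_sum_le (Inr k) = 1"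
| "primal_coeff Y_sum_ge (Inr k) = -1"
| "primal_coeff _ _ = 0"

fun primal_rhs :: "primal_row \<Rightarrow> real" where
  "primal_rhs (W_nonneg a) = 0"
| "primal_rhs (W_lower a) = - C a"
| "primal_rhs (W_upper a) = C a"
| "primal_rhs (Y_nonneg a) = 0"
| "primal_rhs (Y_le_one a) = 1"
| "primal_rhs (Delta_sign m) = 0"
| "primal_rhs W_sum_le = 1"
| "primal_rhs W_sum_ge = -1"
| "primal_rhs Y_sum_le = \<Gamma>"
| "primal_rhs Y_sum_ge = - \<Gamma>"

definition primal_rows :: "primal_row set" where
  "primal_rows = W_nonneg ` {1..N-1} \<union> W_lower ` {1..N-1} \<union> W_upper ` {1..N-1}
     \<union> Y_nonneg ` {1..N-1} \<union> Y_le_one ` {1..N-1} \<union> Delta_sign ` {1..M}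
     \<union> {W_sum_le, W_sum_ge, Y_sum_le, Y_sum_ge}"

lemma sum_primal_rows:
  "(\<Sum>r\<in>primal_rows. f r) =
     (\<Sum>a=1..N-1. f (W_nonneg a) + f (W_lower a) + f (W_upper a) + f (Y_nonneg a) + f (Y_le_one a))
     + (\<Sum>m=1..M. f (Delta_sign m)) + f W_sum_le + f W_sum_ge + f Y_sum_le + f Y_sum_ge"
  unfolding primal_rows_def
  by (subst sum.union_disjoint; auto?)+ (simp add: sum.reindex inj_on_def sum.distrib add.assoc)

lemma primal_rows_feasible_iff:
  "(\<forall>r\<in>primal_rows. (\<Sum>v\<in>{1..N-1} <+> {1..N-1}. primal_coeff r v * x v) \<le> primal_rhs r)
    \<longleftrightarrow> primal_feasible N M h \<Delta> C vl vu \<Gamma> (x \<circ> Inl) (x \<circ> Inr)"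
proof -
  have Delta_sign_row: "(\<Sum>k=1..N-1. h m * \<Delta> m k * x (Inl k)) = h m * dotN N (x \<circ> Inl) (\<Delta> m)" for m
    by (simp add: dotN_def sum_distrib_left mult_ac)
  have "(\<forall>r\<in>primal_rows. (\<Sum>v\<in>{1..N-1} <+> {1..N-1}. primal_coeff r v * x v) \<le> primal_rhs r)
    \<longleftrightarrow> (\<Sum>a=1..N-1. x (Inl a)) \<le> 1 \<and> - (\<Sum>a=1..N-1. x (Inl a)) \<le> -1
      \<and> (\<Sum>a=1..N-1. x (Inr a)) \<le> \<Gamma> \<and> - (\<Sum>a=1..N-1. x (Inr a)) \<le> - \<Gamma>
      \<and> (\<forall>a\<in>{1..N-1}. - x (Inl a) \<le> 0)
      \<and> (\<forall>a\<in>{1..N-1}. - x (Inl a) - vl a * x (Inr a) \<le> - C a)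
      \<and> (\<forall>a\<in>{1..N-1}. x (Inl a) - vu a * x (Inr a) \<le> C a)
      \<and> (\<forall>a\<in>{1..N-1}. - x (Inr a) \<le> 0) \<and> (\<forall>a\<in>{1..N-1}. x (Inr a) \<le> 1)
      \<and> (\<forall>m\<in>{1..M}. (\<Sum>k=1..N-1. h m * \<Delta> m k * x (Inl k)) \<le> 0)"
    unfolding primal_rows_def
    by (simp add: ball_Un sum.Plus sum_negf sum_subtractf mult.assoc)
  also have "\<dots> \<longleftrightarrow> primal_feasible N M h \<Delta> C vl vu \<Gamma> (x \<circ> Inl) (x \<circ> Inr)"
    unfolding primal_feasible_def Vhat_def Yset_def Delta_sign_row by (auto simp: algebra_simps)
  finally show ?thesis .
qed

lemma primal_column_Inl:
  assumes "k \<in> {1..N-1}"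
  shows "(\<Sum>r\<in>primal_rows. \<kappa> r * primal_coeff r (Inl k)) =
    - \<kappa> (W_nonneg k) - \<kappa> (W_lower k) + \<kappa> (W_upper k)
    + (\<Sum>m=1..M. h m * \<Delta> m k * \<kappa> (Delta_sign m)) + \<kappa> W_sum_le - \<kappa> W_sum_ge"
proof -
  have "(\<Sum>r\<in>primal_rows. \<kappa> r * primal_coeff r (Inl k))
      = (\<Sum>r\<in>primal_rows. primal_coeff r (Inl k) * \<kappa> r)"
    by (simp add: mult.commute)
  also have "\<dots> = - \<kappa> (W_nonneg k) - \<kappa> (W_lower k) + \<kappa> (W_upper k)
    + (\<Sum>m=1..M. h m * \<Delta> m k * \<kappa> (Delta_sign m)) + \<kappa> W_sum_le - \<kappa> W_sum_ge"
    using assms by (simp add: sum_primal_rows sum.distrib sum_subtractf sum_negf mult.assoc)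
  finally show ?thesis .
qed

lemma primal_column_Inr:
  assumes "k \<in> {1..N-1}"
  shows "(\<Sum>r\<in>primal_rows. \<kappa> r * primal_coeff r (Inr k)) =
    - vl k * \<kappa> (W_lower k) - vu k * \<kappa> (W_upper k) - \<kappa> (Y_nonneg k) + \<kappa> (Y_le_one k)
    + \<kappa> Y_sum_le - \<kappa> Y_sum_ge"
proof -
  have "(\<Sum>r\<in>primal_rows. \<kappa> r * primal_coeff r (Inr k))
      = (\<Sum>r\<in>primal_rows. primal_coeff r (Inr k) * \<kappa> r)"
    by (simp add: mult.commute)
  also have "\<dots> = - vl k * \<kappa> (W_lower k) - vu k * \<kappa> (W_upper k) - \<kappa> (Y_nonneg k) + \<kappa> (Y_le_one k)
    + \<kappa> Y_sum_le - \<kappa> Y_sum_ge"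
    using assms by (simp add: sum_primal_rows sum.distrib sum_subtractf sum_negf mult.assoc)
  finally show ?thesis .
qed

lemma finite_primal_rows: "finite primal_rows"
  by (simp add: primal_rows_def)

lemma primal_rows_approx_dual:
  assumes feasible: "primal_feasible N M h \<Delta> C vl vu \<Gamma> w\<^sub>0 y\<^sub>0"
    and bounded: "\<And>w y. primal_feasible N M h \<Delta> C vl vu \<Gamma> w y \<Longrightarrow> p \<le> dotN N w gb"
    and "0 < e"
  obtains \<kappa> where "\<forall>r\<in>primal_rows. 0 \<le> \<kappa> r"
    and "\<forall>k\<in>{1..N-1}. (\<Sum>r\<in>primal_rows. \<kappa> r * primal_coeff r (Inl k)) = - gb k"
    and "\<forall>k\<in>{1..N-1}. (\<Sum>r\<in>primal_rows. \<kappa> r * primal_coeff r (Inr k)) = 0"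
    and "p - e \<le> - (\<Sum>r\<in>primal_rows. \<kappa> r * primal_rhs r)"
proof -
  define J where "J = {1..N-1} <+> {1..N-1}"
  define cost :: "nat + nat \<Rightarrow> real" where "cost = case_sum gb (\<lambda>_. 0)"
  have "finite J"
    by (simp add: J_def)
  have feasible_rows: "\<forall>r\<in>primal_rows. (\<Sum>v\<in>J. primal_coeff r v * case_sum w\<^sub>0 y\<^sub>0 v) \<le> primal_rhs r"
    using feasible primal_rows_feasible_iff[of "case_sum w\<^sub>0 y\<^sub>0"]
    by (simp add: J_def case_sum_o_inj)
  have bounded_rows: "p \<le> (\<Sum>v\<in>J. cost v * x v)"
    if "\<forall>r\<in>primal_rows. (\<Sum>v\<in>J. primal_coeff r v * x v) \<le> primal_rhs r" for x
  proof -
    have "p \<le> dotN N (x \<circ> Inl) gb"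
      using bounded that primal_rows_feasible_iff[of x] unfolding J_def by blast
    also have "\<dots> = (\<Sum>v\<in>J. cost v * x v)"
      by (simp add: J_def cost_def sum.Plus dotN_def mult.commute)
    finally show ?thesis .
  qed
  obtain \<kappa> where nonneg: "\<forall>r\<in>primal_rows. 0 \<le> \<kappa> r"
      and cols: "\<forall>v\<in>J. (\<Sum>r\<in>primal_rows. \<kappa> r * primal_coeff r v) = - cost v"
      and obj: "p - e \<le> - (\<Sum>r\<in>primal_rows. \<kappa> r * primal_rhs r)"
    using lp_approx_strong_duality[OF finite_primal_rows \<open>finite J\<close> feasible_rows bounded_rows]
      \<open>0 < e\<close>
    by blast
  show ?thesis
  proof (rule that[OF nonneg _ _ obj]; intro ballI)
    fix k assume "k \<in> {1..N-1}"
    then show "(\<Sum>r\<in>primal_rows. \<kappa> r * primal_coeff r (Inl k)) = - gb k"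
      and "(\<Sum>r\<in>primal_rows. \<kappa> r * primal_coeff r (Inr k)) = 0"
      using bspec[OF cols, of "Inl k"] bspec[OF cols, of "Inr k"]
      by (simp_all add: J_def cost_def InlI InrI)
  qed
qed

lemma primal_approx_dual:
  assumes "primal_feasible N M h \<Delta> C vl vu \<Gamma> w\<^sub>0 y\<^sub>0"
    and "\<And>w y. primal_feasible N M h \<Delta> C vl vu \<Gamma> w y \<Longrightarrow> p \<le> dotN N w gb"
    and "0 < e"
  shows "\<exists>lu lb \<eta> \<tau> \<beta> \<tau>0 \<theta>. dual_feas N M h \<Delta> gb lu lb \<beta> \<eta> \<theta> \<and>
    budget_dual_feas N vl vu lu lb \<tau> \<tau>0 \<and>
    p - e \<le> (\<Sum>i=1..N-1. C i * (lu i - lb i)) - \<beta> - (\<Sum>i=1..N-1. \<tau> i) - \<tau>0 * \<Gamma>"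
proof -
  obtain \<kappa> where nonneg: "\<forall>r\<in>primal_rows. 0 \<le> \<kappa> r"
    and col_w: "\<forall>k\<in>{1..N-1}. (\<Sum>r\<in>primal_rows. \<kappa> r * primal_coeff r (Inl k)) = - gb k"
    and col_y: "\<forall>k\<in>{1..N-1}. (\<Sum>r\<in>primal_rows. \<kappa> r * primal_coeff r (Inr k)) = 0"
    and obj: "p - e \<le> - (\<Sum>r\<in>primal_rows. \<kappa> r * primal_rhs r)"
    using primal_rows_approx_dual[OF assms] .
  define lu where "lu a = \<kappa> (W_lower a)" for a
  define lb where "lb a = \<kappa> (W_upper a)" for a
  define \<eta> where "\<eta> a = \<kappa> (W_nonneg a)" for a
  define \<tau> where "\<tau> a = \<kappa> (Y_le_one a)" for a
  define \<theta> where "\<theta> m = \<kappa> (Delta_sign m)" for m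
  \<comment> \<open>\<open>e\<^sup>T w = 1\<close> and \<open>e\<^sup>T y = \<Gamma>\<close> are pairs of opposite rows, hence free multipliers\<close>
  define \<beta> where "\<beta> = \<kappa> W_sum_le - \<kappa> W_sum_ge"
  define \<tau>0 where "\<tau>0 = \<kappa> Y_sum_le - \<kappa> Y_sum_ge"
  have "dual_feas N M h \<Delta> gb lu lb \<beta> \<eta> \<theta>"
    unfolding dual_feas_def
  proof (intro conjI ballI)
    fix k assume k: "k \<in> {1..N-1}"
    from col_w k have "(\<Sum>r\<in>primal_rows. \<kappa> r * primal_coeff r (Inl k)) = - gb k" ..
    then show "gb k - lu k + lb k + \<beta> - \<eta> k + (\<Sum>m=1..M. \<theta> m * h m * \<Delta> m k) = 0"
      unfolding primal_column_Inl[OF k] by (simp add: lu_def lb_def \<beta>_def \<eta>_def \<theta>_def mult_ac)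
    show "0 \<le> lu k" "0 \<le> lb k" "0 \<le> \<eta> k"
      using k nonneg by (simp_all add: primal_rows_def lu_def lb_def \<eta>_def)
  next
    show "0 \<le> \<theta> m" if "m \<in> {1..M}" for m
      using that nonneg by (simp add: primal_rows_def \<theta>_def)
  qed
  moreover have "budget_dual_feas N vl vu lu lb \<tau> \<tau>0"
    unfolding budget_dual_feas_def
  proof
    fix k assume k: "k \<in> {1..N-1}"
    from col_y k have "(\<Sum>r\<in>primal_rows. \<kappa> r * primal_coeff r (Inr k)) = 0" ..
    then have "- (lu k * vl k) - lb k * vu k + \<tau> k + \<tau>0 = \<kappa> (Y_nonneg k)"
      unfolding primal_column_Inr[OF k] by (simp add: lu_def lb_def \<tau>_def \<tau>0_def mult_ac)
    then show "- (lu k * vl k) - lb k * vu k + \<tau> k + \<tau>0 \<ge> 0 \<and> 0 \<le> \<tau> k"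
      using k nonneg by (simp add: primal_rows_def \<tau>_def)
  qed
  moreover have "- (\<Sum>r\<in>primal_rows. \<kappa> r * primal_rhs r)
      = (\<Sum>i=1..N-1. C i * (lu i - lb i)) - \<beta> - (\<Sum>i=1..N-1. \<tau> i) - \<tau>0 * \<Gamma>"
    by (simp add: sum_primal_rows lu_def lb_def \<tau>_def \<beta>_def \<tau>0_def algebra_simps
        sum.distrib sum_subtractf)
  with obj have "p - e \<le> (\<Sum>i=1..N-1. C i * (lu i - lb i)) - \<beta> - (\<Sum>i=1..N-1. \<tau> i) - \<tau>0 * \<Gamma>"
    by simp
  ultimately show ?thesis
    by blast
qed

end

lemma primal_feasible_center:
  assumes "3 \<le> N" and "c \<in> Vset N M h \<Delta>" and "0 \<le> \<Gamma>" and "\<Gamma> \<le> real (N - 1)"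
  shows "primal_feasible N M h \<Delta> (Rmap N c) (vlow N M h \<Delta> c) (vup N M h \<Delta> c) \<Gamma>
    (Rmap N c) (\<lambda>_. \<Gamma> / real (N - 1))"
proof -
  have "0 < real (N - 1)"
    using assms(1) by simp
  then have "(\<lambda>_. \<Gamma> / real (N - 1)) \<in> Yset N \<Gamma>"
    using assms(3,4) by (simp add: Yset_def)
  then show ?thesis
    using Rmap_in_Vhat[OF assms(1,2)] vlow_vup_nonneg[OF assms(2)] assms(3)
    by (simp add: primal_feasible_def Yset_def)
qed

lemma D_val_eq_infinity:
  assumes "c \<in> Vset N M h \<Delta>" and "\<Gamma> < 0"
  shows "D_val N M h \<Delta> gb c \<Gamma> = \<infinity>"
proof (rule ereal_top)
  fix B :: real
  \<comment> \<open>stationarity holds with \<open>\<beta> = 0, \<eta> = 0, \<theta> = 0\<close>; the objective grows linearly in \<open>\<tau>0\<close>\<close>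
  define lu where "lu i = max (gb i) 0" for i
  define lb where "lb i = max (- gb i) 0" for i
  define \<tau> where "\<tau> i = lu i * vlow N M h \<Delta> c i + lb i * vup N M h \<Delta> c i" for i
  define base where "base = I2 N M h \<Delta> gb c (\<lambda>_. 0) (\<lambda>_. 0)"
  define t where "t = max 0 ((B - base + (\<Sum>i=1..N-1. \<tau> i)) / - \<Gamma>)"
  have feas: "dual_feas N M h \<Delta> gb lu lb 0 (\<lambda>_. 0) (\<lambda>_. 0)"
    by (auto simp: dual_feas_def lu_def lb_def)
  have "0 \<le> t"
    by (simp add: t_def)
  then have budget: "budget_dual_feas N (vlow N M h \<Delta> c) (vup N M h \<Delta> c) lu lb \<tau> t"
    using vlow_vup_nonneg[OF assms(1)] by (simp add: budget_dual_feas_def \<tau>_def lu_def lb_def)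
  have "(B - base + (\<Sum>i=1..N-1. \<tau> i)) / - \<Gamma> \<le> t"
    by (simp only: t_def max.cobounded2)
  then have "B - base + (\<Sum>i=1..N-1. \<tau> i) \<le> t * - \<Gamma>"
    using pos_divide_le_eq[of "- \<Gamma>"] assms(2) by simp
  then have "ereal B \<le> ereal (base - (\<Sum>i=1..N-1. \<tau> i) - t * \<Gamma>)"
    by simp
  also have "\<dots> \<le> D_val N M h \<Delta> gb c \<Gamma>"
    unfolding base_def by (rule le_D_val[OF feas budget])
  finally show "ereal B \<le> D_val N M h \<Delta> gb c \<Gamma>" .
qed

lemma P_val_approx_le_D_val:
  assumes "3 \<le> N" and "P_val N M h \<Delta> gb c \<Gamma> = ereal p" and "0 < e"
    and feasible: "primal_feasible N M h \<Delta> (Rmap N c) (vlow N M h \<Delta> c) (vup N M h \<Delta> c) \<Gamma> w\<^sub>0 y\<^sub>0"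
  shows "ereal (p - e) \<le> D_val N M h \<Delta> gb c \<Gamma>"
proof -
  have bounded: "p \<le> dotN N w gb"
    if "primal_feasible N M h \<Delta> (Rmap N c) (vlow N M h \<Delta> c) (vup N M h \<Delta> c) \<Gamma> w y" for w y
    using P_val_le[OF that, where gb = gb] assms(2) by simp
  obtain lu lb \<eta> \<tau> \<beta> \<tau>0 \<theta> where feas: "dual_feas N M h \<Delta> gb lu lb \<beta> \<eta> \<theta>"
    and budget: "budget_dual_feas N (vlow N M h \<Delta> c) (vup N M h \<Delta> c) lu lb \<tau> \<tau>0"
    and approx: "p - e \<le> (\<Sum>i=1..N-1. Rmap N c i * (lu i - lb i)) - \<beta>
      - (\<Sum>i=1..N-1. \<tau> i) - \<tau>0 * \<Gamma>"
    using primal_approx_dual[OF feasible _ \<open>0 < e\<close>, where gb = gb and p = p] bounded by blast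
  have "ereal (p - e) \<le> ereal (I2 N M h \<Delta> gb c \<eta> \<theta> - (\<Sum>i=1..N-1. \<tau> i) - \<tau>0 * \<Gamma>)"
    using approx I2_eq[OF assms(1) feas] by simp
  also have "\<dots> \<le> D_val N M h \<Delta> gb c \<Gamma>"
    by (rule le_D_val[OF feas budget])
  finally show ?thesis .
qed

lemma P_val_le_D_val:
  assumes "3 \<le> N" and "c \<in> Vset N M h \<Delta>" and "\<Gamma> \<le> real (N - 1)"
  shows "P_val N M h \<Delta> gb c \<Gamma> \<le> D_val N M h \<Delta> gb c \<Gamma>"
proof (cases "\<Gamma> < 0")
  case True
  then show ?thesis
    using D_val_eq_infinity[OF assms(2)] by simp
next
  case False
  then have feasible: "primal_feasible N M h \<Delta> (Rmap N c) (vlow N M h \<Delta> c) (vup N M h \<Delta> c) \<Gamma>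
      (Rmap N c) (\<lambda>_. \<Gamma> / real (N - 1))"
    using primal_feasible_center[OF assms(1,2) _ assms(3)] by simp
  show ?thesis
  proof (cases "P_val N M h \<Delta> gb c \<Gamma>")
    case (real p)
    show ?thesis
    proof (rule ereal_le_epsilon2)
      fix e :: real assume "0 < e"
      then have "ereal (p - e) + ereal e \<le> D_val N M h \<Delta> gb c \<Gamma> + ereal e"
        using P_val_approx_le_D_val[OF assms(1) real _ feasible] by (intro add_right_mono)
      then show "P_val N M h \<Delta> gb c \<Gamma> \<le> D_val N M h \<Delta> gb c \<Gamma> + ereal e"
        using real by simp
    qed
  next
    case PInf
    then show ?thesis
      using P_val_le[OF feasible, where gb = gb] by simp
  next
    case MInf
    then show ?thesis
      by simp
  qed
qed

theorem theorem2:
  fixes N M K :: nat and x :: "nat \<Rightarrow> real"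
    and z :: "real ^ 'n" and \<xi> :: "nat \<Rightarrow> real ^ 'n"
    and r1 r2 r3 p h :: "nat \<Rightarrow> real" and c :: "nat \<Rightarrow> real" and \<Gamma> :: real
  defines "\<Delta> \<equiv> Delta N x r1 r2 r3 p"
    and "gb \<equiv> (\<lambda>i. (1 / real K) * (\<Sum>k=1..K. gfun N x (z \<bullet> \<xi> k) i))"
  assumes N3: "N \<ge> 3"
    and x_incr: "\<forall>i\<in>{1..<N}. x i < x (Suc i)"
    and K1: "K \<ge> 1"
    and xi_range: "\<forall>k\<in>{1..K}. z \<bullet> \<xi> k \<in> {x 1..x N}"
    and M1: "M \<ge> 1"
    and params: "\<forall>m\<in>{1..M}. r1 m \<le> r3 m \<and> r1 m \<in> {x 1..x N} \<and> r2 m \<in> {x 1..x N}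
                   \<and> r3 m \<in> {x 1..x N} \<and> p m \<in> {0..1} \<and> (h m = 1 \<or> h m = -1)"
    and V_int: "coord_interior N (Vset N M h \<Delta>) \<noteq> {}"
    and center: "analytic_center N M h \<Delta> c"
    and Gamma: "\<Gamma> \<le> real (N - 1)"
  shows "P_val N M h \<Delta> gb c \<Gamma> = D_val N M h \<Delta> gb c \<Gamma> \<and>
         L_val N M h \<Delta> gb c \<Gamma> = D_val N M h \<Delta> gb c \<Gamma>"
proof -
  have "c \<in> Vset N M h \<Delta>"
    using center by (simp add: analytic_center_def coord_interior_def)
  then have "P_val N M h \<Delta> gb c \<Gamma> \<le> D_val N M h \<Delta> gb c \<Gamma>"
    using P_val_le_D_val N3 Gamma by blast
  moreover have "D_val N M h \<Delta> gb c \<Gamma> \<le> L_val N M h \<Delta> gb c \<Gamma>"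
    by (rule D_val_le_L_val)
  moreover have "L_val N M h \<Delta> gb c \<Gamma> \<le> P_val N M h \<Delta> gb c \<Gamma>"
    using L_val_le_P_val N3 by blast
  ultimately show ?thesis
    by (metis order_antisym order_trans)
qed

end
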